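(* Let $0<p<1/2$, $c>0$, $k=c\log_2 n$ (an integer $\ge2$), $s\in\{0,1\}^n$, $x\in\{0,1\}^k$, $i\in\{1,\dots,n-k+1\}$. Given $T$ independent traces $\tilde S_1,\dots,\tilde S_T$ of $s$, let $\hat P_{s,y}[i]=\frac1T\sum_{t=1}^T\mathbb 1\{\tilde S_t[i:i+|y|-1]=y\}$ for any binary string $y$, and $$\hat K_{s,x}[i]=\frac{1}{(1-p)^k}\left(\hat P_{s,x}[i]-\sum_{\ell=k+1}^{n}\sum_{y\in Y_\ell(x)}(-1)^{|y|-|x|+1}\hat P_{s,y}[i]\binom{y}{x}'\left(\frac{p}{1-p}\right)^{\ell-k}\right).$$ Then for every $\epsilon>0$, $$\Pr\left(|\hat K_{s,x}[i]-K_{s,x}[i]|\ge\epsilon\right)\le 2\exp\!\left(-\frac{2T\epsilon^2}{n\left(n^{-c\log_2(1-p)}\left(1+2n^{\alpha_c(p)}\right)\right)^2}\right).$$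
   Context: Deletion channel: a trace of $s$ is obtained by deleting each bit of $s$ independently with probability $p$; traces are independent. Strings are indexed from 1, $s[a:b]=(s[a],\dots,s[b])$; the indicator $\mathbb 1\{\tilde S_t[i:i+m-1]=y\}$ is $0$ if the trace is too short. For a string $z$, $z[2:-2]$ is $z$ with first and last symbols removed. $\binom{y}{z}$ is the number of ways to delete $|y|-|z|$ symbols of $y$ to obtain $z$, and $\binom{y}{z}'=\binom{y[2:-2]}{z[2:-2]}$. $Y_\ell(x)$ is the set of binary strings $y$ of length $\ell$ that are supersequences of $x$ with the same first bit and same last bit as $x$. $K_{s,x}[i]=\sum_{j=1}^{n-k+1}\binom{j-1}{i-1}(1-p)^{i-1}p^{j-i}\mathbb 1\{s[j:j+k-1]=x\}$. $H$ is the binary entropy (base 2) and $\alpha_c(p)=1+c\log_2\frac{1-p}{p}+\frac{cH(1-\frac{p}{1-p})+c\log_2\frac{p}{1-p}}{1-\frac{p}{1-p}}$. *)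

theory Defs
  imports "HOL-Probability.Probability" "HOL-Library.Sublist"
begin

text \<open>Binary strings are bool lists, indexed from 1 in the paper.\<close>

primrec trace_pmf :: "real \<Rightarrow> bool list \<Rightarrow> bool list pmf" where
  "trace_pmf p [] = return_pmf []"
| "trace_pmf p (b # s) =
     bind_pmf (bernoulli_pmf (1 - p))
       (\<lambda>keep. map_pmf (\<lambda>t. if keep then b # t else t) (trace_pmf p s))"

definition traces_pmf :: "real \<Rightarrow> bool list \<Rightarrow> nat \<Rightarrow> bool list list pmf" where
  "traces_pmf p s T = replicate_pmf T (trace_pmf p s)"

text \<open>Indicator 1{w[i:i+|y|-1] = y} (1-indexed; 0 if w too short).\<close>
definition win_ind :: "bool list \<Rightarrow> nat \<Rightarrow> bool list \<Rightarrow> real" where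
  "win_ind w i y = (if i + length y - 1 \<le> length w \<and> take (length y) (drop (i - 1) w) = y
                    then 1 else 0)"

definition P_hat :: "bool list list \<Rightarrow> bool list \<Rightarrow> nat \<Rightarrow> real" where
  "P_hat ts y i = (1 / real (length ts)) * (\<Sum>t<length ts. win_ind (ts ! t) i y)"

definition binom_str :: "bool list \<Rightarrow> bool list \<Rightarrow> nat" where
  "binom_str y z = card {S. S \<subseteq> {..<length y} \<and> card S = length z \<and> nths y S = z}"

definition inner :: "bool list \<Rightarrow> bool list" where
  "inner z = butlast (tl z)"

definition binom_str' :: "bool list \<Rightarrow> bool list \<Rightarrow> nat" where
  "binom_str' y z = binom_str (inner y) (inner z)"

definition Yset :: "nat \<Rightarrow> bool list \<Rightarrow> bool list set" where
  "Yset l x = {y. length y = l \<and> subseq x y \<and> hd y = hd x \<and> last y = last x}"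

definition K_hat :: "real \<Rightarrow> nat \<Rightarrow> bool list list \<Rightarrow> bool list \<Rightarrow> nat \<Rightarrow> real" where
  "K_hat p n ts x i =
     (1 / (1 - p) ^ length x) *
     (P_hat ts x i -
      (\<Sum>l = length x + 1..n. \<Sum>y\<in>Yset l x.
          (-1) ^ (length y - length x + 1) * P_hat ts y i * real (binom_str' y x)
          * (p / (1 - p)) ^ (l - length x)))"

definition K_true :: "real \<Rightarrow> bool list \<Rightarrow> bool list \<Rightarrow> nat \<Rightarrow> real" where
  "K_true p s x i =
     (\<Sum>j = 1..length s - length x + 1.
        real ((j - 1) choose (i - 1)) * (1 - p) ^ (i - 1) * p ^ (j - i)
        * (if take (length x) (drop (j - 1) s) = x then 1 else 0))"

definition H2 :: "real \<Rightarrow> real" where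
  "H2 q = - q * log 2 q - (1 - q) * log 2 (1 - q)"

definition alpha_c :: "real \<Rightarrow> real \<Rightarrow> real" where
  "alpha_c c p = 1 + c * log 2 ((1 - p) / p)
     + (c * H2 (1 - p / (1 - p)) + c * log 2 (p / (1 - p))) / (1 - p / (1 - p))"

end

theory Submission
  imports Defs
begin

text \<open>
  For a single trace the window indicator at position \<open>i\<close> has expectation \<open>P\<^sub>s\<^sub>,\<^sub>y[i]\<close>,
  and these expectations satisfy the same first-bit recursion as \<open>K\<^sub>s\<^sub>,\<^sub>x[i]\<close>: the first
  bit of \<open>s\<close> is either deleted or kept. Inducting on \<open>s\<close> along this recursion shows that the
  alternating sum over supersequences \<open>y\<close> of \<open>x\<close>, weighted by \<open>(-p/(1-p))\<^bsup>|y|-|x|\<^esup>\<close>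
  and by the number of embeddings of the interior of \<open>x\<close> into that of \<open>y\<close>, equals
  \<open>(1-p)\<^bsup>k\<^esup> K\<^sub>s\<^sub>,\<^sub>x[i]\<close>; hence the single-trace estimator is unbiased.
  At most one \<open>y\<close> of each length matches a window of the trace, and by the binomial theorem
  \<open>binom(l-2,k-2) r\<^bsup>l-k\<^esup> \<le> (1-r)\<^bsup>-k\<^esup>\<close>, so the estimator lies in an interval of
  width \<open>(1 + 2n(1-r)\<^bsup>-k\<^esup>)/(1-p)\<^bsup>k\<^esup>\<close>. The estimator from \<open>T\<close> traces is the
  average of \<open>T\<close> independent single-trace estimators, so Hoeffding's inequality applies, and
  \<open>k = c log\<^sub>2 n\<close> turns the width into the stated powers of \<open>n\<close>.
\<close>

section \<open>Counting subsequence embeddings\<close>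

fun subseq_count :: "'a list \<Rightarrow> 'a list \<Rightarrow> nat" where
  "subseq_count v [] = 1"
| "subseq_count [] (a # u) = 0"
| "subseq_count (a # v) (b # u) =
     subseq_count v (b # u) + (if a = b then subseq_count v u else 0)"

lemma subseq_count_Nil_left: "subseq_count [] u = (if u = [] then 1 else 0)"
  by (cases u) auto

lemma subseq_count_Cons_left:
  "subseq_count (a # v) u =
     subseq_count v u + (case u of [] \<Rightarrow> 0 | b # u' \<Rightarrow> if a = b then subseq_count v u' else 0)"
  by (cases u) auto

lemma subseq_count_eq_0_if_longer: "length v < length u \<Longrightarrow> subseq_count v u = 0"
  by (induction v u rule: subseq_count.induct) auto

lemma subseq_count_same_length:
  "length v = length u \<Longrightarrow> subseq_count v u = (if v = u then 1 else 0)"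
  by (induction v u rule: subseq_count.induct) (auto simp: subseq_count_eq_0_if_longer)

lemma subseq_if_subseq_count_nonzero: "subseq_count v u \<noteq> 0 \<Longrightarrow> subseq u v"
  by (induction v u rule: subseq_count.induct) (auto split: if_splits dest: subseq_Cons')

lemma subseq_count_le_choose: "subseq_count v u \<le> length v choose length u"
  by (induction v u rule: subseq_count.induct) auto

definition embeddings :: "'a list \<Rightarrow> 'a list \<Rightarrow> nat set set" where
  "embeddings y z = {S. S \<subseteq> {..<length y} \<and> nths y S = z}"

lemma finite_embeddings: "finite (embeddings y z)"
  unfolding embeddings_def by (rule finite_subset[of _ "Pow {..<length y}"]) auto

lemma card_eq_length_nths: "S \<subseteq> {..<length y} \<Longrightarrow> card S = length (nths y S)"
  by (simp add: length_nths Collect_conj_eq Int_commute lessThan_def[symmetric] Int_absorb2)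

lemma binom_str_eq_card_embeddings: "binom_str y z = card (embeddings y z)"
  unfolding binom_str_def embeddings_def by (metis card_eq_length_nths)

lemma embeddings_Nil_right: "embeddings y [] = {{}}"
proof -
  have "S = {}" if "S \<subseteq> {..<length y}" "nths y S = []" for S :: "nat set"
    using card_eq_length_nths[OF that(1)] that finite_subset[OF that(1)] by simp
  then show ?thesis by (auto simp: embeddings_def)
qed

lemma embeddings_Cons:
  "embeddings (a # y) z = (\<lambda>S. Suc ` S) ` embeddings y z \<union>
     (case z of [] \<Rightarrow> {}
      | b # z' \<Rightarrow> if a = b then (\<lambda>S. insert 0 (Suc ` S)) ` embeddings y z' else {})"
  (is "?L = ?A \<union> ?B")
proof (rule set_eqI)
  fix S :: "nat set"
  define S' where "S' = {j. Suc j \<in> S}"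
  have bound: "S \<subseteq> {..<Suc (length y)} \<longleftrightarrow> S' \<subseteq> {..<length y}"
    unfolding S'_def subset_iff lessThan_iff
    by (metis mem_Collect_eq not0_implies_Suc Suc_less_eq zero_less_Suc)
  have S'_Suc: "{j. Suc j \<in> Suc ` T} = T" "{j. Suc j \<in> insert 0 (Suc ` T)} = T" for T
    by auto
  have shift_eq: "Suc ` A = Suc ` B \<longleftrightarrow> A = B" for A B
    by (metis S'_Suc(1))
  have shift0_eq: "insert 0 (Suc ` A) = insert 0 (Suc ` B) \<longleftrightarrow> A = B" for A B
    by (metis S'_Suc(2))
  show "S \<in> ?L \<longleftrightarrow> S \<in> ?A \<union> ?B"
  proof (cases "0 \<in> S")
    case True
    have S: "S = insert 0 (Suc ` S')"
      unfolding S'_def using True by (auto simp: image_iff) (metis not0_implies_Suc)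
    have "S \<notin> ?A" using True by auto
    moreover have "S \<in> ?B \<longleftrightarrow> S' \<subseteq> {..<length y} \<and> z = a # nths y S'"
      by (cases z) (auto simp: S embeddings_def shift0_eq)
    ultimately show ?thesis
      using True by (auto simp: embeddings_def bound nths_Cons S'_def)
  next
    case False
    have S: "S = Suc ` S'"
      unfolding S'_def using False by (auto simp: image_iff) (metis not0_implies_Suc)
    have "S \<notin> ?B" using False by (auto split: list.splits)
    moreover have "S \<in> ?A \<longleftrightarrow> S' \<subseteq> {..<length y} \<and> z = nths y S'"
      by (auto simp: S embeddings_def shift_eq)
    ultimately show ?thesis
      using False by (auto simp: embeddings_def bound nths_Cons S'_def)
  qed
qed

lemma binom_str_eq_subseq_count: "binom_str y z = subseq_count y z"
proof (induction y arbitrary: z)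
  case Nil
  have "embeddings [] z = (if z = [] then {{}} else {})"
    by (auto simp: embeddings_def)
  then show ?case by (cases z) (auto simp: binom_str_eq_card_embeddings)
next
  case (Cons a y)
  have inj_shift: "inj (\<lambda>S::nat set. Suc ` S)" and inj_shift0: "inj (\<lambda>S. insert 0 (Suc ` S))"
    by (auto intro!: injI simp: inj_image_eq_iff)
  have card_shift: "card ((\<lambda>S. Suc ` S) ` embeddings y z) = subseq_count y z" for z
    using Cons.IH card_image[OF inj_on_subset[OF inj_shift]]
    by (simp add: binom_str_eq_card_embeddings)
  show ?case
  proof (cases z)
    case Nil
    then show ?thesis by (simp add: binom_str_eq_card_embeddings embeddings_Nil_right)
  next
    case (Cons b z')
    have card_shift0: "card ((\<lambda>S. insert 0 (Suc ` S)) ` embeddings y z') = subseq_count y z'"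
      using Cons.IH card_image[OF inj_on_subset[OF inj_shift0]]
      by (simp add: binom_str_eq_card_embeddings)
    have "(\<lambda>S. Suc ` S) ` embeddings y z \<inter> (\<lambda>S. insert 0 (Suc ` S)) ` embeddings y z' = {}"
      by auto
    then show ?thesis
      unfolding binom_str_eq_card_embeddings embeddings_Cons using Cons
      by (simp add: card_Un_disjoint finite_embeddings card_shift card_shift0)
  qed
qed

section \<open>Window probabilities of a single trace\<close>

lemma set_trace_pmf_subset: "set_pmf (trace_pmf p s) \<subseteq> {t. length t \<le> length s}"
  by (induction s) (auto simp: set_bind_pmf)

lemma length_le_if_in_trace: "t \<in> set_pmf (trace_pmf p s) \<Longrightarrow> length t \<le> length s"
  using set_trace_pmf_subset by blast

lemma finite_bit_lists_length_le: "finite {v :: bool list. length v \<le> m}"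
  using finite_lists_length_le[of "UNIV :: bool set" m] by simp

lemma finite_set_trace_pmf: "finite (set_pmf (trace_pmf p s))"
  by (rule finite_subset[OF set_trace_pmf_subset finite_bit_lists_length_le])

lemma expectation_trace_pmf_Cons:
  fixes f :: "bool list \<Rightarrow> real"
  assumes "0 \<le> p" "p \<le> 1"
  shows "measure_pmf.expectation (trace_pmf p (b # s)) f =
           (1 - p) * measure_pmf.expectation (trace_pmf p s) (\<lambda>t. f (b # t))
         + p * measure_pmf.expectation (trace_pmf p s) f"
proof -
  have "measure_pmf.expectation (trace_pmf p (b # s)) f =
    (\<Sum>keep\<in>UNIV. pmf (bernoulli_pmf (1 - p)) keep *\<^sub>R
        measure_pmf.expectation (map_pmf (\<lambda>t. if keep then b # t else t) (trace_pmf p s)) f)"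
    unfolding trace_pmf.simps by (rule pmf_expectation_bind) (auto simp: finite_set_trace_pmf)
  then show ?thesis using assms by (simp add: UNIV_bool)
qed

lemma win_ind_nonneg: "0 \<le> win_ind w i y"
  and win_ind_le_1: "win_ind w i y \<le> 1"
  by (simp_all add: win_ind_def)

lemma win_ind_Nil: "y \<noteq> [] \<Longrightarrow> win_ind [] i y = 0"
  by (simp add: win_ind_def)

lemma win_ind_Nil_right: "win_ind t (Suc 0) [] = 1"
  by (simp add: win_ind_def)

lemma win_ind_Cons_Suc: "win_ind (b # t) (Suc (Suc i)) y = win_ind t (Suc i) y"
  by (simp add: win_ind_def)

lemma win_ind_Cons_1:
  "win_ind (b # t) (Suc 0) (a # y) = (if a = b then win_ind t (Suc 0) y else 0)"
  by (auto simp: win_ind_def)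

text \<open>The paper's \<open>P\<^sub>s\<^sub>,\<^sub>y[i]\<close>, the expectation of \<open>P_hat\<close>.\<close>
definition window_prob :: "real \<Rightarrow> bool list \<Rightarrow> nat \<Rightarrow> bool list \<Rightarrow> real" where
  "window_prob p s i y = measure_pmf.expectation (trace_pmf p s) (\<lambda>t. win_ind t i y)"

lemma window_prob_Nil: "y \<noteq> [] \<Longrightarrow> window_prob p [] i y = 0"
  by (simp add: window_prob_def win_ind_Nil)

lemma window_prob_Nil_right: "window_prob p s (Suc 0) [] = 1"
  by (simp add: window_prob_def win_ind_Nil_right)

lemma window_prob_Cons_Suc:
  "0 \<le> p \<Longrightarrow> p \<le> 1 \<Longrightarrow>
   window_prob p (b # s) (Suc (Suc i)) y =
     (1 - p) * window_prob p s (Suc i) y + p * window_prob p s (Suc (Suc i)) y"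
  by (simp add: window_prob_def expectation_trace_pmf_Cons win_ind_Cons_Suc del: trace_pmf.simps)

lemma window_prob_Cons_1:
  "0 \<le> p \<Longrightarrow> p \<le> 1 \<Longrightarrow>
   window_prob p (b # s) (Suc 0) (a # y) =
     (1 - p) * (if a = b then window_prob p s (Suc 0) y else 0) + p * window_prob p s (Suc 0) (a # y)"
  by (simp add: window_prob_def expectation_trace_pmf_Cons win_ind_Cons_1 del: trace_pmf.simps)

lemma window_prob_eq_0_if_longer:
  assumes "length s < length y"
  shows "window_prob p s i y = 0"
proof -
  have "win_ind t i y = 0" if "t \<in> set_pmf (trace_pmf p s)" for t
    using length_le_if_in_trace[OF that] assms by (auto simp: win_ind_def)
  then show ?thesis unfolding window_prob_def by (subst integral_measure_pmf_real[where A="{}"]) auto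
qed

definition bit_strings :: "nat \<Rightarrow> bool list set" where
  "bit_strings m = {v. length v = m}"

lemma finite_bit_strings: "finite (bit_strings m)"
  unfolding bit_strings_def
  by (rule finite_subset[OF _ finite_bit_lists_length_le[of m]]) auto

lemma bit_strings_0: "bit_strings 0 = {[]}"
  by (auto simp: bit_strings_def)

lemma sum_bit_strings_Suc:
  "(\<Sum>v\<in>bit_strings (Suc m). f v) = (\<Sum>v\<in>bit_strings m. f (True # v)) + (\<Sum>v\<in>bit_strings m. f (False # v))"
proof -
  have split: "bit_strings (Suc m) = Cons True ` bit_strings m \<union> Cons False ` bit_strings m"
    by (auto simp: bit_strings_def length_Suc_conv image_iff)
  have "(\<Sum>v\<in>bit_strings (Suc m). f v) =
      (\<Sum>v\<in>Cons True ` bit_strings m. f v) + (\<Sum>v\<in>Cons False ` bit_strings m. f v)"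
    unfolding split by (rule sum.union_disjoint) (auto simp: finite_bit_strings)
  then show ?thesis by (simp add: sum.reindex)
qed

section \<open>The first-bit recursion of \<open>K\<close>\<close>

definition K_sum :: "real \<Rightarrow> bool list \<Rightarrow> bool list \<Rightarrow> nat \<Rightarrow> real" where
  "K_sum p x s i = (\<Sum>j<length s. real (j choose (i - 1)) * (1 - p) ^ (i - 1) * p ^ (j + 1 - i)
       * (if take (length x) (drop j s) = x then 1 else 0))"

lemma K_true_eq_K_sum:
  assumes "x \<noteq> []"
  shows "K_true p s x i = K_sum p x s i"
proof -
  let ?f = "\<lambda>j. real (j choose (i - 1)) * (1 - p) ^ (i - 1) * p ^ (j + 1 - i)
                * (if take (length x) (drop j s) = x then 1 else 0)"
  have vanish: "?f j = 0" if "length s - length x + 1 \<le> j" for j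
  proof -
    have "length (take (length x) (drop j s)) < length x"
    proof -
      have "0 < length x" using assms by simp
      then have "length s - j < length x" using that by arith
      then show ?thesis by simp
    qed
    then show ?thesis by auto
  qed
  have "K_true p s x i = (\<Sum>j<length s - length x + 1. ?f j)"
    unfolding K_true_def image_Suc_lessThan[symmetric] by (simp add: sum.reindex)
  also have "\<dots> = (\<Sum>j<length s. ?f j)"
    using assms by (intro sum.mono_neutral_cong) (auto intro!: vanish)
  finally show ?thesis unfolding K_sum_def .
qed

lemma K_sum_Nil: "K_sum p x [] i = 0"
  by (simp add: K_sum_def)

lemma K_sum_Cons_1:
  "K_sum p x (b # s) (Suc 0) = (if take (length x) (b # s) = x then 1 else 0) + p * K_sum p x s (Suc 0)"
  unfolding K_sum_def length_Cons sum.lessThan_Suc_shift by (simp add: sum_distrib_left algebra_simps)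

lemma K_sum_Cons_Suc:
  "K_sum p x (b # s) (Suc (Suc i)) = (1 - p) * K_sum p x s (Suc i) + p * K_sum p x s (Suc (Suc i))"
proof -
  let ?I = "\<lambda>j. if take (length x) (drop j s) = x then 1 else 0 :: real"
  have step: "real (Suc j choose Suc i) * (1 - p) ^ Suc i * p ^ (j - i) * ?I j =
      (1 - p) * (real (j choose i) * (1 - p) ^ i * p ^ (j - i) * ?I j)
    + p * (real (j choose Suc i) * (1 - p) ^ Suc i * p ^ (j - Suc i) * ?I j)" for j
  proof -
    have shift: "real (j choose Suc i) * p ^ (j - i) = p * (real (j choose Suc i) * p ^ (j - Suc i))"
      by (cases "j < Suc i") (simp_all add: Suc_diff_Suc[symmetric])
    have "real (Suc j choose Suc i) * (1 - p) ^ Suc i * p ^ (j - i) * ?I j =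
        (1 - p) * (real (j choose i) * (1 - p) ^ i * p ^ (j - i) * ?I j)
      + (real (j choose Suc i) * p ^ (j - i)) * (1 - p) ^ Suc i * ?I j"
      by (simp add: algebra_simps)
    then show ?thesis unfolding shift by (simp add: algebra_simps)
  qed
  have "K_sum p x (b # s) (Suc (Suc i)) =
      (\<Sum>j<length s. real (Suc j choose Suc i) * (1 - p) ^ Suc i * p ^ (j - i) * ?I j)"
    unfolding K_sum_def length_Cons sum.lessThan_Suc_shift by simp
  also have "\<dots> = (1 - p) * K_sum p x s (Suc i) + p * K_sum p x s (Suc (Suc i))"
    unfolding step K_sum_def by (simp add: sum.distrib sum_distrib_left)
  finally show ?thesis .
qed

lemma K_true_Nil: "x \<noteq> [] \<Longrightarrow> K_true p [] x i = 0"
  by (simp add: K_true_eq_K_sum K_sum_Nil)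

lemma K_true_Cons_1:
  "x \<noteq> [] \<Longrightarrow>
   K_true p (b # s) x (Suc 0) = (if take (length x) (b # s) = x then 1 else 0) + p * K_true p s x (Suc 0)"
  by (simp add: K_true_eq_K_sum K_sum_Cons_1)

lemma K_true_Cons_Suc:
  "x \<noteq> [] \<Longrightarrow>
   K_true p (b # s) x (Suc (Suc i)) = (1 - p) * K_true p s x (Suc i) + p * K_true p s x (Suc (Suc i))"
  by (simp add: K_true_eq_K_sum K_sum_Cons_Suc)

section \<open>The inversion identity\<close>

lemma window_prob_Cons_1_hd_tl:
  "0 \<le> p \<Longrightarrow> p \<le> 1 \<Longrightarrow> y \<noteq> [] \<Longrightarrow>
   window_prob p (b # s) (Suc 0) y =
     (1 - p) * (if hd y = b then window_prob p s (Suc 0) (tl y) else 0) + p * window_prob p s (Suc 0) y"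
  by (cases y) (simp_all add: window_prob_Cons_1)

lemma power_diff_Suc_mult_subseq_count:
  fixes q :: real
  assumes "length v = m"
  shows "q ^ (Suc m - length u) * real (subseq_count v u) = q * (q ^ (m - length u) * real (subseq_count v u))"
proof (cases "length u \<le> m")
  case True
  then have "Suc m - length u = Suc (m - length u)" by simp
  then show ?thesis by simp
qed (use assms in \<open>simp add: subseq_count_eq_0_if_longer\<close>)

lemma sum_bit_strings_prepend_subseq_count:
  fixes q :: real
  shows "(\<Sum>v\<in>bit_strings m. q ^ (Suc m - length u) * real (subseq_count (b # v) u) * g v) =
    q * (\<Sum>v\<in>bit_strings m. q ^ (m - length u) * real (subseq_count v u) * g v)
    + (case u of [] \<Rightarrow> 0
       | a # u' \<Rightarrow> if a = b then (\<Sum>v\<in>bit_strings m. q ^ (m - length u') * real (subseq_count v u') * g v)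
                   else 0)"
proof -
  have "q ^ (Suc m - length u) * real (subseq_count (b # v) u) * g v =
      q * (q ^ (m - length u) * real (subseq_count v u) * g v)
    + (case u of [] \<Rightarrow> 0 | a # u' \<Rightarrow> if a = b then q ^ (m - length u') * real (subseq_count v u') * g v else 0)"
    if "v \<in> bit_strings m" for v
  proof -
    have "length v = m" using that by (simp add: bit_strings_def)
    from power_diff_Suc_mult_subseq_count[OF this, of q u] show ?thesis
      by (cases u) (auto simp: subseq_count_Cons_left algebra_simps)
  qed
  then show ?thesis
    by (cases u) (auto simp: sum.distrib sum_distrib_left intro: sum.cong)
qed

text \<open>The exponent \<open>m - length u\<close> truncates only where \<open>subseq_count v u = 0\<close>.\<close>
definition prefix_inversion_sum :: "real \<Rightarrow> bool \<Rightarrow> nat \<Rightarrow> bool list \<Rightarrow> bool list \<Rightarrow> real" where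
  "prefix_inversion_sum p c N s u =
     (\<Sum>m<N. \<Sum>v\<in>bit_strings m. (- (p / (1 - p))) ^ (m - length u) * real (subseq_count v u)
        * window_prob p s (Suc 0) (v @ [c]))"

lemma prefix_inversion_sum_Nil: "prefix_inversion_sum p c N [] u = 0"
  by (simp add: prefix_inversion_sum_def window_prob_Nil)

lemma prefix_inversion_sum_Cons:
  assumes "0 < p" "p < 1"
  shows "prefix_inversion_sum p c (Suc N) (b # s) u =
    (1 - p) * ((if u = [] \<and> c = b then 1 else 0) - (p / (1 - p)) * prefix_inversion_sum p c N s u
       + (case u of [] \<Rightarrow> 0 | a # u' \<Rightarrow> if a = b then prefix_inversion_sum p c N s u' else 0))
    + p * prefix_inversion_sum p c (Suc N) s u"
proof -
  define q where "q = - (p / (1 - p))"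
  define layer where "layer w m = (\<Sum>v\<in>bit_strings m. q ^ (m - length w) * real (subseq_count v w)
      * window_prob p s (Suc 0) (v @ [c]))" for w m
  define F where "F v = (if hd (v @ [c]) = b then window_prob p s (Suc 0) (tl (v @ [c])) else 0)" for v
  define G where "G m = (\<Sum>v\<in>bit_strings m. q ^ (m - length u) * real (subseq_count v u) * F v)" for m
  have sum_layer: "prefix_inversion_sum p c N' s w = (\<Sum>m<N'. layer w m)" for N' w
    unfolding prefix_inversion_sum_def layer_def q_def ..
  have "prefix_inversion_sum p c (Suc N) (b # s) u =
      (\<Sum>m<Suc N. \<Sum>v\<in>bit_strings m. (1 - p) * (q ^ (m - length u) * real (subseq_count v u) * F v)
        + p * (q ^ (m - length u) * real (subseq_count v u) * window_prob p s (Suc 0) (v @ [c])))"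
    unfolding prefix_inversion_sum_def q_def F_def using assms
    by (intro sum.cong refl) (simp add: window_prob_Cons_1_hd_tl algebra_simps)
  also have "\<dots> = (1 - p) * (\<Sum>m<Suc N. G m) + p * prefix_inversion_sum p c (Suc N) s u"
    unfolding G_def sum_layer layer_def by (simp add: sum.distrib sum_distrib_left del: sum.lessThan_Suc)
  finally have first_bit: "prefix_inversion_sum p c (Suc N) (b # s) u =
      (1 - p) * (\<Sum>m<Suc N. G m) + p * prefix_inversion_sum p c (Suc N) s u" .
  have G_0: "G 0 = (if u = [] \<and> c = b then 1 else 0)"
    by (simp add: G_def F_def bit_strings_0 subseq_count_Nil_left window_prob_Nil_right)
  have G_Suc: "G (Suc m) = q * layer u m
      + (case u of [] \<Rightarrow> 0 | a # u' \<Rightarrow> if a = b then layer u' m else 0)" for m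
  proof -
    have "G (Suc m) = (\<Sum>v\<in>bit_strings m. q ^ (Suc m - length u) * real (subseq_count (b # v) u)
        * window_prob p s (Suc 0) (v @ [c]))"
      unfolding G_def by (cases b) (simp_all add: sum_bit_strings_Suc F_def)
    then show ?thesis
      unfolding layer_def by (simp only: sum_bit_strings_prepend_subseq_count)
  qed
  have "(\<Sum>m<Suc N. G m) = (if u = [] \<and> c = b then 1 else 0) + q * prefix_inversion_sum p c N s u
      + (case u of [] \<Rightarrow> 0 | a # u' \<Rightarrow> if a = b then prefix_inversion_sum p c N s u' else 0)"
    unfolding sum.lessThan_Suc_shift G_0 G_Suc sum_layer
    by (cases u) (auto simp: sum.distrib sum_distrib_left)
  with first_bit show ?thesis by (simp add: q_def)
qed

lemma prefix_inversion_sum_eq: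
  assumes "0 < p" "p < 1" and "length s \<le> N"
  shows "prefix_inversion_sum p c N s u =
           (1 - p) ^ Suc (length u) * (if take (Suc (length u)) s = u @ [c] then 1 else 0)"
  using assms(3)
proof (induction s arbitrary: N u)
  case Nil
  then show ?case by (simp add: prefix_inversion_sum_Nil)
next
  case (Cons b s)
  then obtain N' where N: "N = Suc N'" "length s \<le> N'" by (cases N) auto
  have IH: "prefix_inversion_sum p c N' s w =
      (1 - p) ^ Suc (length w) * (if take (Suc (length w)) s = w @ [c] then 1 else 0)"
    and IH_Suc: "prefix_inversion_sum p c (Suc N') s w =
      (1 - p) ^ Suc (length w) * (if take (Suc (length w)) s = w @ [c] then 1 else 0)" for w
    using Cons.IH N(2) by simp_all
  have "1 - p \<noteq> 0" using assms by simp
  then show ?case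
    unfolding N(1) prefix_inversion_sum_Cons[OF assms(1,2)] IH IH_Suc
    using assms by (cases u) (auto simp: field_simps)
qed

definition window_inversion_sum ::
    "real \<Rightarrow> bool \<Rightarrow> bool \<Rightarrow> bool list \<Rightarrow> nat \<Rightarrow> bool list \<Rightarrow> nat \<Rightarrow> real" where
  "window_inversion_sum p b c u N s i =
     (\<Sum>m<N. \<Sum>v\<in>bit_strings m. (- (p / (1 - p))) ^ (m - length u) * real (subseq_count v u)
        * window_prob p s i (b # v @ [c]))"

lemma window_inversion_sum_Nil: "window_inversion_sum p b c u N [] i = 0"
  by (simp add: window_inversion_sum_def window_prob_Nil)

lemma window_inversion_sum_Cons_1:
  assumes "0 \<le> p" "p \<le> 1"
  shows "window_inversion_sum p b c u N (b' # s) (Suc 0) =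
    (1 - p) * (if b = b' then prefix_inversion_sum p c N s u else 0)
    + p * window_inversion_sum p b c u N s (Suc 0)"
proof -
  have summand: "C * window_prob p (b' # s) (Suc 0) (b # v @ [c]) =
      (1 - p) * (if b = b' then C * window_prob p s (Suc 0) (v @ [c]) else 0)
      + p * (C * window_prob p s (Suc 0) (b # v @ [c]))" for C v
    using assms by (simp add: window_prob_Cons_1 algebra_simps)
  show ?thesis
    unfolding window_inversion_sum_def prefix_inversion_sum_def summand
    by (cases "b = b'") (simp_all add: sum.distrib sum_distrib_left)
qed

lemma window_inversion_sum_Cons_Suc:
  assumes "0 \<le> p" "p \<le> 1"
  shows "window_inversion_sum p b c u N (b' # s) (Suc (Suc i)) =
    (1 - p) * window_inversion_sum p b c u N s (Suc i) + p * window_inversion_sum p b c u N s (Suc (Suc i))"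
proof -
  have summand: "C * window_prob p (b' # s) (Suc (Suc i)) y =
      (1 - p) * (C * window_prob p s (Suc i) y) + p * (C * window_prob p s (Suc (Suc i)) y)" for C y
    using assms by (simp add: window_prob_Cons_Suc algebra_simps)
  show ?thesis
    unfolding window_inversion_sum_def summand by (simp add: sum.distrib sum_distrib_left)
qed

lemma window_inversion_sum_eq:
  assumes "0 < p" "p < 1" and "length s \<le> N" "1 \<le> i"
  shows "window_inversion_sum p b c u N s i = (1 - p) ^ length (b # u @ [c]) * K_true p s (b # u @ [c]) i"
  using assms(3,4)
proof (induction s arbitrary: i)
  case Nil
  then show ?case by (simp add: window_inversion_sum_Nil K_true_Nil)
next
  case (Cons b' s)
  let ?x = "b # u @ [c]"
  have IH: "window_inversion_sum p b c u N s j = (1 - p) ^ length ?x * K_true p s ?x j" if "1 \<le> j" for j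
    using Cons that by simp
  consider "i = Suc 0" | i' where "i = Suc (Suc i')"
    using Cons.prems(2) by (metis One_nat_def Suc_le_D not0_implies_Suc)
  then show ?case
  proof cases
    case 1
    have "take (length ?x) (b' # s) = ?x \<longleftrightarrow> b = b' \<and> take (Suc (length u)) s = u @ [c]"
      by auto
    then show ?thesis
      using assms Cons.prems
      by (simp add: 1 window_inversion_sum_Cons_1 IH prefix_inversion_sum_eq K_true_Cons_1 algebra_simps)
  next
    case 2
    then show ?thesis
      using assms by (simp add: window_inversion_sum_Cons_Suc IH K_true_Cons_Suc algebra_simps)
  qed
qed

section \<open>Unbiasedness of the single-trace estimator\<close>

lemma hd_inner_last_eq: "2 \<le> length y \<Longrightarrow> y = hd y # inner y @ [last y]"
  by (cases y) (auto simp: inner_def)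

lemma finite_Yset: "finite (Yset l x)"
  by (rule finite_subset[OF _ finite_bit_strings[of l]]) (auto simp: Yset_def bit_strings_def)

lemma sum_Yset_binom_str':
  fixes g :: "bool list \<Rightarrow> real"
  assumes "2 \<le> l"
  shows "(\<Sum>y\<in>Yset l (b # u @ [c]). g y * real (binom_str' y (b # u @ [c]))) =
         (\<Sum>v\<in>bit_strings (l - 2). g (b # v @ [c]) * real (subseq_count v u))"
proof -
  let ?x = "b # u @ [c]" and ?frame = "\<lambda>v. b # v @ [c]"
  let ?A = "{v \<in> bit_strings (l - 2). subseq_count v u \<noteq> 0}"
  have inner_frame: "inner (?frame v) = v" for v by (simp add: inner_def)
  have binom: "binom_str' y ?x = subseq_count (inner y) u" for y
    by (simp add: binom_str'_def binom_str_eq_subseq_count inner_frame)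
  have image: "{y \<in> Yset l ?x. subseq_count (inner y) u \<noteq> 0} = ?frame ` ?A"
  proof (rule set_eqI, rule iffI)
    fix y assume "y \<in> {y \<in> Yset l ?x. subseq_count (inner y) u \<noteq> 0}"
    then have y: "length y = l" "hd y = b" "last y = c" "subseq_count (inner y) u \<noteq> 0"
      by (auto simp: Yset_def)
    then have "y = ?frame (inner y)" using hd_inner_last_eq[of y] assms by simp
    moreover have "inner y \<in> ?A" using y by (simp add: bit_strings_def inner_def)
    ultimately show "y \<in> ?frame ` ?A" by blast
  next
    fix y assume "y \<in> ?frame ` ?A"
    then obtain v where v: "y = ?frame v" "length v = l - 2" "subseq_count v u \<noteq> 0"
      by (auto simp: bit_strings_def)
    then have "subseq (u @ [c]) (v @ [c])"
      by (intro list_emb_append_mono subseq_if_subseq_count_nonzero) auto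
    then show "y \<in> {y \<in> Yset l ?x. subseq_count (inner y) u \<noteq> 0}"
      using v assms by (simp add: Yset_def inner_frame)
  qed
  have "(\<Sum>y\<in>Yset l ?x. g y * real (binom_str' y ?x)) =
        (\<Sum>y\<in>{y \<in> Yset l ?x. subseq_count (inner y) u \<noteq> 0}. g y * real (subseq_count (inner y) u))"
    unfolding binom by (rule sum.mono_neutral_right) (auto simp: finite_Yset)
  also have "\<dots> = (\<Sum>v\<in>?A. g (?frame v) * real (subseq_count v u))"
    unfolding image by (subst sum.reindex) (auto intro: inj_onI simp: inner_frame)
  also have "\<dots> = (\<Sum>v\<in>bit_strings (l - 2). g (?frame v) * real (subseq_count v u))"
    by (rule sum.mono_neutral_left) (auto simp: finite_bit_strings)
  finally show ?thesis .
qed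

lemma sum_Yset_alternating:
  fixes g :: "bool list \<Rightarrow> real" and r :: real
  assumes "length (b # u @ [c]) < l"
  shows "(\<Sum>y\<in>Yset l (b # u @ [c]). (-1) ^ (length y - length (b # u @ [c]) + 1) * g y
           * real (binom_str' y (b # u @ [c])) * r ^ (l - length (b # u @ [c]))) =
         - (\<Sum>v\<in>bit_strings (l - 2). (- r) ^ (l - 2 - length u) * real (subseq_count v u) * g (b # v @ [c]))"
proof -
  let ?x = "b # u @ [c]"
  have "(\<Sum>y\<in>Yset l ?x. (-1) ^ (length y - length ?x + 1) * g y * real (binom_str' y ?x) * r ^ (l - length ?x))
      = (\<Sum>y\<in>Yset l ?x. ((-1) ^ (l - length ?x + 1) * r ^ (l - length ?x) * g y) * real (binom_str' y ?x))"
    by (rule sum.cong) (simp_all add: Yset_def)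
  also have "\<dots> = (\<Sum>v\<in>bit_strings (l - 2). ((-1) ^ (l - length ?x + 1) * r ^ (l - length ?x)
      * g (b # v @ [c])) * real (subseq_count v u))"
    by (rule sum_Yset_binom_str') (use assms in simp)
  also have "\<dots> = - (\<Sum>v\<in>bit_strings (l - 2). (- r) ^ (l - 2 - length u) * real (subseq_count v u) * g (b # v @ [c]))"
  proof -
    have "l - 2 - length u = l - length ?x" using assms by simp
    then show ?thesis
      unfolding sum_negf[symmetric] by (intro sum.cong refl) (simp add: power_minus[of r] mult_ac)
  qed
  finally show ?thesis .
qed

lemma window_inversion_sum_eq_supersequence_sum:
  assumes x: "x = b # u @ [c]" and "length x \<le> n"
  shows "window_inversion_sum p b c u (n - 1) s i =
    window_prob p s i x - (\<Sum>l = length x + 1..n. \<Sum>y\<in>Yset l x. (-1) ^ (length y - length x + 1)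
      * window_prob p s i y * real (binom_str' y x) * (p / (1 - p)) ^ (l - length x))"
proof -
  define k where "k = length x"
  define r where "r = p / (1 - p)"
  define G where "G m = (\<Sum>v\<in>bit_strings m. (- r) ^ (m - length u) * real (subseq_count v u)
      * window_prob p s i (b # v @ [c]))" for m
  have k: "k = Suc (Suc (length u))" "k \<le> n" using assms by (simp_all add: k_def)
  have layer: "(\<Sum>y\<in>Yset l x. (-1) ^ (length y - k + 1) * window_prob p s i y
      * real (binom_str' y x) * r ^ (l - k)) = - G (l - 2)" if "k + 1 \<le> l" for l
    unfolding G_def k_def x using that k by (intro sum_Yset_alternating) (simp add: x)
  have shift: "(\<Sum>l = k + 1..n. G (l - 2)) = (\<Sum>m = Suc (length u)..<n - 1. G m)"
  proof -
    have "(\<Sum>l = k + 1..n. G (l - 2)) = (\<Sum>l = Suc (length u) + 2..(n - 2) + 2. G (l - 2))"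
      using k by (intro sum.cong) auto
    also have "\<dots> = (\<Sum>m = Suc (length u)..<n - 1. G m)"
      unfolding sum.shift_bounds_cl_nat_ivl using k by (intro sum.cong) auto
    finally show ?thesis .
  qed
  have G_below: "G m = 0" if "m < length u" for m
    unfolding G_def using that by (intro sum.neutral) (auto simp: bit_strings_def subseq_count_eq_0_if_longer)
  have G_length_u: "G (length u) = window_prob p s i x"
  proof -
    have "G (length u) = (\<Sum>v\<in>bit_strings (length u). if v = u then window_prob p s i (b # v @ [c]) else 0)"
      unfolding G_def by (intro sum.cong refl) (simp add: bit_strings_def subseq_count_same_length)
    also have "\<dots> = window_prob p s i x"
      using finite_bit_strings[of "length u"] unfolding bit_strings_def by (simp add: x)
    finally show ?thesis .
  qed
  have "window_inversion_sum p b c u (n - 1) s i = (\<Sum>m<Suc (length u). G m) + (\<Sum>m = Suc (length u)..<n - 1. G m)"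
    unfolding window_inversion_sum_def G_def[symmetric] r_def[symmetric] lessThan_atLeast0
    using k by (intro sum.atLeastLessThan_concat[symmetric]) auto
  also have "\<dots> = window_prob p s i x + (\<Sum>l = k + 1..n. G (l - 2))"
    unfolding shift by (simp add: G_below G_length_u)
  also have "\<dots> = window_prob p s i x - (\<Sum>l = k + 1..n. \<Sum>y\<in>Yset l x. (-1) ^ (length y - k + 1)
      * window_prob p s i y * real (binom_str' y x) * r ^ (l - k))"
  proof -
    have "(\<Sum>l = k + 1..n. \<Sum>y\<in>Yset l x. (-1) ^ (length y - k + 1)
        * window_prob p s i y * real (binom_str' y x) * r ^ (l - k)) = - (\<Sum>l = k + 1..n. G (l - 2))"
      unfolding sum_negf[symmetric] by (rule sum.cong[OF refl]) (rule layer, simp)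
    then show ?thesis by simp
  qed
  finally show ?thesis unfolding k_def r_def .
qed

lemma window_inversion_sum_drop_last_layer:
  assumes "1 \<le> length s"
  shows "window_inversion_sum p b c u (length s) s i = window_inversion_sum p b c u (length s - 1) s i"
proof -
  have "window_prob p s i (b # v @ [c]) = 0" if "length v = length s - 1" for v
    using that assms by (intro window_prob_eq_0_if_longer) simp
  then have "window_inversion_sum p b c u (Suc (length s - 1)) s i = window_inversion_sum p b c u (length s - 1) s i"
    by (simp add: window_inversion_sum_def bit_strings_def)
  moreover have "Suc (length s - 1) = length s" using assms by simp
  ultimately show ?thesis by metis
qed

lemma K_hat_single_trace:
  "K_hat p n [w] x i = (1 / (1 - p) ^ length x) * (win_ind w i x -
     (\<Sum>l = length x + 1..n. \<Sum>y\<in>Yset l x. (-1) ^ (length y - length x + 1) * win_ind w i y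
       * real (binom_str' y x) * (p / (1 - p)) ^ (l - length x)))"
  by (simp add: K_hat_def P_hat_def)

lemma expectation_K_hat_single_trace:
  "measure_pmf.expectation (trace_pmf p s) (\<lambda>w. K_hat p n [w] x i) =
     (1 / (1 - p) ^ length x) * (window_prob p s i x -
     (\<Sum>l = length x + 1..n. \<Sum>y\<in>Yset l x. (-1) ^ (length y - length x + 1) * window_prob p s i y
       * real (binom_str' y x) * (p / (1 - p)) ^ (l - length x)))"
proof -
  have "integrable (measure_pmf (trace_pmf p s)) f" for f :: "bool list \<Rightarrow> real"
    by (rule integrable_measure_pmf_finite[OF finite_set_trace_pmf])
  then show ?thesis
    unfolding K_hat_single_trace window_prob_def
    by (simp add: integral_diff integral_mult_right_zero integral_mult_left_zero)
qed

theorem K_hat_single_trace_unbiased: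
  assumes "0 < p" "p < 1" and "2 \<le> length x" "length x \<le> length s" "1 \<le> i"
  shows "measure_pmf.expectation (trace_pmf p s) (\<lambda>w. K_hat p (length s) [w] x i) = K_true p s x i"
proof -
  define b u c where "b = hd x" and "u = inner x" and "c = last x"
  have x: "x = b # u @ [c]" unfolding b_def u_def c_def using hd_inner_last_eq[OF assms(3)] .
  have "measure_pmf.expectation (trace_pmf p s) (\<lambda>w. K_hat p (length s) [w] x i) =
      window_inversion_sum p b c u (length s - 1) s i / (1 - p) ^ length x"
    unfolding expectation_K_hat_single_trace window_inversion_sum_eq_supersequence_sum[OF x assms(4)]
    by simp
  also have "\<dots> = window_inversion_sum p b c u (length s) s i / (1 - p) ^ length x"
    using assms(3,4) by (simp add: window_inversion_sum_drop_last_layer)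
  also have "\<dots> = K_true p s x i"
    using window_inversion_sum_eq[OF assms(1,2) order.refl assms(5)] assms(1,2) by (simp add: x)
  finally show ?thesis .
qed

section \<open>Boundedness of the single-trace estimator\<close>

lemma sum_win_ind_le_1:
  assumes "finite A" "\<And>y. y \<in> A \<Longrightarrow> length y = l"
  shows "(\<Sum>y\<in>A. win_ind w i y) \<le> 1"
proof -
  define w0 where "w0 = take l (drop (i - 1) w)"
  have single: "win_ind w i y = (if y = w0 then win_ind w i w0 else 0)" if "y \<in> A" for y
  proof (cases "y = w0")
    case False
    then have "take (length y) (drop (i - 1) w) \<noteq> y" using assms(2)[OF that] by (simp add: w0_def)
    then show ?thesis using False by (simp add: win_ind_def)
  qed simp
  have "(\<Sum>y\<in>A. win_ind w i y) = (\<Sum>y\<in>A. if y = w0 then win_ind w i w0 else 0)"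
    by (rule sum.cong[OF refl single])
  also have "\<dots> = (if w0 \<in> A then win_ind w i w0 else 0)"
    by (rule sum.delta[OF assms(1)])
  finally show ?thesis by (simp add: win_ind_le_1)
qed

lemma binomial_term_le_1:
  fixes r :: real
  assumes "0 \<le> r" "r \<le> 1" "j \<le> M"
  shows "real (M choose j) * r ^ (M - j) * (1 - r) ^ j \<le> 1"
proof -
  have "real (M choose j) * (1 - r) ^ j * r ^ (M - j) \<le> (\<Sum>k\<le>M. real (M choose k) * (1 - r) ^ k * r ^ (M - k))"
    by (rule member_le_sum) (use assms in auto)
  also have "\<dots> = ((1 - r) + r) ^ M" by (rule binomial_ring[symmetric])
  finally show ?thesis by (simp add: mult_ac)
qed

lemma binom_str'_mult_power_le:
  fixes r :: real
  assumes r: "0 \<le> r" "r < 1" and "2 \<le> length x" "length x \<le> length y"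
  shows "real (binom_str' y x) * r ^ (length y - length x) \<le> 1 / (1 - r) ^ length x"
proof -
  define k l where "k = length x" and "l = length y"
  have "binom_str' y x \<le> (l - 2) choose (k - 2)"
    using subseq_count_le_choose[of "inner y" "inner x"]
    by (simp add: binom_str'_def binom_str_eq_subseq_count inner_def k_def l_def numeral_2_eq_2)
  then have "real (binom_str' y x) * r ^ (l - k) \<le> real ((l - 2) choose (k - 2)) * r ^ (l - k)"
    using r by (intro mult_right_mono) auto
  also have "\<dots> \<le> 1 / (1 - r) ^ (k - 2)"
  proof -
    have "(l - 2) - (k - 2) = l - k" using assms by (simp add: k_def l_def)
    then show ?thesis
      using binomial_term_le_1[of r "k - 2" "l - 2"] assms by (simp add: field_simps k_def l_def)
  qed
  also have "\<dots> \<le> 1 / (1 - r) ^ k"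
    using r by (intro divide_left_mono power_decreasing mult_pos_pos) auto
  finally show ?thesis by (simp add: k_def l_def)
qed

lemma abs_supersequence_sum_le:
  fixes r :: real
  assumes r: "0 \<le> r" "r < 1" and "2 \<le> length x"
  shows "\<bar>\<Sum>l = length x + 1..n. \<Sum>y\<in>Yset l x. (-1) ^ (length y - length x + 1) * win_ind w i y
       * real (binom_str' y x) * r ^ (l - length x)\<bar> \<le> real n * (1 / (1 - r) ^ length x)"
proof -
  let ?W = "1 / (1 - r) ^ length x"
  have layer: "(\<Sum>y\<in>Yset l x. \<bar>(-1) ^ (length y - length x + 1) * win_ind w i y
       * real (binom_str' y x) * r ^ (l - length x)\<bar>) \<le> ?W" if "length x \<le> l" for l
  proof -
    have "(\<Sum>y\<in>Yset l x. \<bar>(-1) ^ (length y - length x + 1) * win_ind w i y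
        * real (binom_str' y x) * r ^ (l - length x)\<bar>) \<le> (\<Sum>y\<in>Yset l x. win_ind w i y * ?W)"
    proof (rule sum_mono)
      fix y assume "y \<in> Yset l x"
      then have y: "length y = l" by (simp add: Yset_def)
      have "\<bar>(-1) ^ (length y - length x + 1) * win_ind w i y * real (binom_str' y x) * r ^ (l - length x)\<bar>
          = win_ind w i y * (real (binom_str' y x) * r ^ (length y - length x))"
        using r y by (simp add: abs_mult win_ind_nonneg)
      also have "\<dots> \<le> win_ind w i y * ?W"
        using binom_str'_mult_power_le[OF r assms(3)] that y by (intro mult_left_mono win_ind_nonneg) auto
      finally show "\<bar>(-1) ^ (length y - length x + 1) * win_ind w i y * real (binom_str' y x) * r ^ (l - length x)\<bar>
          \<le> win_ind w i y * ?W" .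
    qed
    also have "\<dots> = (\<Sum>y\<in>Yset l x. win_ind w i y) * ?W"
      by (rule sum_distrib_right[symmetric])
    also have "\<dots> \<le> 1 * ?W"
    proof (rule mult_right_mono)
      show "(\<Sum>y\<in>Yset l x. win_ind w i y) \<le> 1"
        by (rule sum_win_ind_le_1[OF finite_Yset]) (simp add: Yset_def)
    qed (use r in simp)
    finally show ?thesis by simp
  qed
  have "\<bar>\<Sum>l = length x + 1..n. \<Sum>y\<in>Yset l x. (-1) ^ (length y - length x + 1) * win_ind w i y
       * real (binom_str' y x) * r ^ (l - length x)\<bar> \<le> (\<Sum>l = length x + 1..n. ?W)"
    by (intro order.trans[OF sum_abs] sum_mono order.trans[OF sum_abs] layer) auto
  also have "\<dots> = real (n - length x) * ?W" by simp
  also have "\<dots> \<le> real n * ?W"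
    using r by (intro mult_right_mono) auto
  finally show ?thesis .
qed

lemma K_hat_single_trace_bounds:
  assumes p: "0 < p" "p < 1/2" and "2 \<le> length x"
  defines "W \<equiv> 1 / (1 - p / (1 - p)) ^ length x"
  shows "K_hat p n [w] x i \<in> {- (real n * W) / (1 - p) ^ length x .. (1 + real n * W) / (1 - p) ^ length x}"
proof -
  have r: "0 \<le> p / (1 - p)" "p / (1 - p) < 1" using p by (auto simp: field_simps)
  define D where "D = (\<Sum>l = length x + 1..n. \<Sum>y\<in>Yset l x. (-1) ^ (length y - length x + 1) * win_ind w i y
       * real (binom_str' y x) * (p / (1 - p)) ^ (l - length x))"
  have "\<bar>D\<bar> \<le> real n * W"
    unfolding D_def W_def by (rule abs_supersequence_sum_le[OF r assms(3)])
  then have lower: "- (real n * W) \<le> win_ind w i x - D" and upper: "win_ind w i x - D \<le> 1 + real n * W"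
    using win_ind_nonneg[of w i x] win_ind_le_1[of w i x] abs_le_D1[of D] abs_le_D2[of D] by linarith+
  have "K_hat p n [w] x i = (win_ind w i x - D) / (1 - p) ^ length x"
    by (simp add: K_hat_single_trace D_def)
  moreover have "0 \<le> (1 - p) ^ length x" using p by simp
  ultimately show ?thesis
    unfolding atLeastAtMost_iff by (intro conjI) (simp_all only: divide_right_mono lower upper)
qed

section \<open>Concentration\<close>

lemma replicate_pmf_eq_map_Pi_pmf:
  "replicate_pmf T q = map_pmf (\<lambda>f. map f [0..<T]) (Pi_pmf {..<T} d (\<lambda>_. q))"
proof (induction T)
  case 0
  then show ?case by simp
next
  case (Suc T)
  have "replicate_pmf (Suc T) q = replicate_pmf (T + 1) q" by simp
  also have "\<dots> = do {xs \<leftarrow> replicate_pmf T q; y \<leftarrow> q; return_pmf (xs @ [y])}"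
    unfolding replicate_pmf_distrib replicate_pmf_1
    by (simp add: map_pmf_def bind_assoc_pmf bind_return_pmf)
  also have "\<dots> = do {f \<leftarrow> Pi_pmf {..<T} d (\<lambda>_. q); y \<leftarrow> q; return_pmf (map f [0..<T] @ [y])}"
    unfolding Suc by (simp add: bind_map_pmf)
  also have "\<dots> = do {y \<leftarrow> q; f \<leftarrow> Pi_pmf {..<T} d (\<lambda>_. q); return_pmf (map f [0..<T] @ [y])}"
    by (rule bind_commute_pmf)
  also have "\<dots> = map_pmf (\<lambda>f. map f [0..<Suc T]) (Pi_pmf (insert T {..<T}) d (\<lambda>_. q))"
    by (subst Pi_pmf_insert') (simp_all add: map_bind_pmf)
  also have "insert T {..<T} = {..<Suc T}" by auto
  finally show ?case .
qed

lemma Hoeffding_replicate_pmf: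
  fixes q :: "'a pmf" and Z :: "'a \<Rightarrow> real"
  assumes T: "T \<ge> 1" and ab: "a < b" and Z: "\<And>w. Z w \<in> {a..b}" and \<epsilon>: "\<epsilon> \<ge> 0"
  shows "measure_pmf.prob (replicate_pmf T q)
      {ts. \<bar>(\<Sum>t<T. Z (ts ! t)) / real T - measure_pmf.expectation q Z\<bar> \<ge> \<epsilon>}
      \<le> 2 * exp (- 2 * real T * \<epsilon>\<^sup>2 / (b - a)\<^sup>2)"
proof -
  define Q where "Q = Pi_pmf {..<T} undefined (\<lambda>_. q)"
  define \<mu> where "\<mu> = measure_pmf.expectation q Z"
  have component: "map_pmf (\<lambda>f. f t) Q = q" if "t < T" for t
    unfolding Q_def using that by (subst Pi_pmf_component) auto
  have distr_component: "distr (measure_pmf Q) borel (\<lambda>f. Z (f t)) = distr (measure_pmf q) borel Z"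
    if "t < T" for t
  proof -
    have "distr (measure_pmf Q) borel (\<lambda>f. Z (f t)) = distr (measure_pmf (map_pmf (\<lambda>f. f t) Q)) borel Z"
      unfolding map_pmf_rep_eq by (subst distr_distr) (auto simp: o_def)
    then show ?thesis using component[OF that] by simp
  qed
  interpret H: Hoeffding_ineq_iid "measure_pmf Q" "{..<T}" "\<lambda>t f. Z (f t)" "\<lambda>f. Z (f 0)" a b \<mu>
  proof unfold_locales
    show "prob_space.indep_vars (measure_pmf Q) (\<lambda>_. borel) (\<lambda>t f. Z (f t)) {..<T}"
      unfolding Q_def
      by (intro prob_space.indep_vars_compose2[OF _ indep_vars_Pi_pmf])
         (auto simp: measure_pmf.prob_space_axioms)
    show "distr (measure_pmf Q) borel (\<lambda>f. Z (f t)) = distr (measure_pmf Q) borel (\<lambda>f. Z (f 0))"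
      if "t \<in> {..<T}" for t
      using that T by (simp add: distr_component)
    have "measure_pmf.expectation Q (\<lambda>f. Z (f 0)) = measure_pmf.expectation (map_pmf (\<lambda>f. f 0) Q) Z"
      by simp
    then show "\<mu> \<equiv> measure_pmf.expectation Q (\<lambda>f. Z (f 0))"
      using component[of 0] T by (simp add: \<mu>_def)
  qed (use Z in auto)
  have "measure_pmf.prob (replicate_pmf T q) {ts. \<bar>(\<Sum>t<T. Z (ts ! t)) / real T - \<mu>\<bar> \<ge> \<epsilon>}
      = measure_pmf.prob Q {f \<in> space (measure_pmf Q). \<bar>(\<Sum>t\<in>{..<T}. Z (f t)) / real (card {..<T}) - \<mu>\<bar> \<ge> \<epsilon>}"
    unfolding replicate_pmf_eq_map_Pi_pmf[of T q undefined] Q_def[symmetric] by simp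
  also have "\<dots> \<le> 2 * exp (- 2 * real (card {..<T}) * \<epsilon>\<^sup>2 / (b - a)\<^sup>2)"
    by (rule H.Hoeffding_ineq_abs_ge'[OF \<epsilon> ab]) (use T in \<open>auto simp: lessThan_empty_iff\<close>)
  finally show ?thesis by (simp add: \<mu>_def)
qed

lemma K_hat_eq_average:
  assumes "length ts = T"
  shows "K_hat p n ts x i = (\<Sum>t<T. K_hat p n [ts ! t] x i) / T"
proof -
  define C where "C = 1 / (1 - p) ^ length x"
  define L where "L = {length x + 1..n}"
  define a where "a l y = (-1) ^ (length y - length x + 1) * real (binom_str' y x) * (p / (1 - p)) ^ (l - length x)"
    for l y
  define f where "f t y = win_ind (ts ! t) i y" for t y
  have K_hat_affine: "K_hat p n ws x i = C * (P_hat ws x i - (\<Sum>l\<in>L. \<Sum>y\<in>Yset l x. a l y * P_hat ws y i))"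
    for ws by (simp add: K_hat_def C_def L_def a_def mult_ac)
  have P_hat_average: "P_hat ts y i = (\<Sum>t<T. f t y) / T" for y
    by (simp add: P_hat_def assms f_def)
  have "(\<Sum>l\<in>L. \<Sum>y\<in>Yset l x. a l y * ((\<Sum>t<T. f t y) / T)) = (\<Sum>t<T. \<Sum>l\<in>L. \<Sum>y\<in>Yset l x. a l y * f t y) / T"
    by (simp add: sum_divide_distrib sum_distrib_left sum.swap[of _ "{..<T}"] times_divide_eq_right)
  then have "K_hat p n ts x i = C * ((\<Sum>t<T. f t x) - (\<Sum>t<T. \<Sum>l\<in>L. \<Sum>y\<in>Yset l x. a l y * f t y)) / T"
    unfolding K_hat_affine P_hat_average by (simp add: diff_divide_distrib[symmetric])
  also have "C * ((\<Sum>t<T. f t x) - (\<Sum>t<T. \<Sum>l\<in>L. \<Sum>y\<in>Yset l x. a l y * f t y)) =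
      (\<Sum>t<T. K_hat p n [ts ! t] x i)"
    unfolding K_hat_affine sum_subtractf[symmetric] sum_distrib_left by (simp add: P_hat_def f_def)
  finally show ?thesis .
qed

lemma K_hat_concentration:
  assumes p: "0 < p" "p < 1/2" and x: "2 \<le> length x" "length x \<le> length s"
    and "1 \<le> i" "1 \<le> T" "0 \<le> \<epsilon>"
  defines "W \<equiv> 1 / (1 - p / (1 - p)) ^ length x"
  shows "measure_pmf.prob (traces_pmf p s T) {ts. \<bar>K_hat p (length s) ts x i - K_true p s x i\<bar> \<ge> \<epsilon>}
    \<le> 2 * exp (- 2 * real T * \<epsilon>\<^sup>2 / ((1 + 2 * (real (length s) * W)) / (1 - p) ^ length x)\<^sup>2)"
proof -
  define Z where "Z w = K_hat p (length s) [w] x i" for w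
  define a where "a = - (real (length s) * W) / (1 - p) ^ length x"
  define b where "b = (1 + real (length s) * W) / (1 - p) ^ length x"
  have width: "b - a = (1 + 2 * (real (length s) * W)) / (1 - p) ^ length x"
    unfolding a_def b_def diff_divide_distrib[symmetric] by (simp add: algebra_simps)
  have "0 \<le> real (length s) * W" using p by (simp add: W_def field_simps)
  then have "0 < b - a" unfolding width using p by (intro divide_pos_pos) auto
  then have "a < b" by simp
  have Z_bounds: "Z w \<in> {a..b}" for w
    unfolding Z_def a_def b_def W_def by (rule K_hat_single_trace_bounds[OF p x(1)])
  have expectation: "measure_pmf.expectation (trace_pmf p s) Z = K_true p s x i"
    unfolding Z_def using p x assms(5) by (intro K_hat_single_trace_unbiased) auto
  have average: "K_hat p (length s) ts x i = (\<Sum>t<T. Z (ts ! t)) / T"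
    if "ts \<in> set_pmf (replicate_pmf T (trace_pmf p s))" for ts
    unfolding Z_def using that by (intro K_hat_eq_average) (simp add: set_replicate_pmf)
  have "measure_pmf.prob (traces_pmf p s T) {ts. \<bar>K_hat p (length s) ts x i - K_true p s x i\<bar> \<ge> \<epsilon>}
      = measure_pmf.prob (replicate_pmf T (trace_pmf p s))
          {ts. \<bar>(\<Sum>t<T. Z (ts ! t)) / real T - measure_pmf.expectation (trace_pmf p s) Z\<bar> \<ge> \<epsilon>}"
    unfolding traces_pmf_def expectation by (intro measure_eq_AE AE_pmfI) (simp_all add: average)
  also have "\<dots> \<le> 2 * exp (- 2 * real T * \<epsilon>\<^sup>2 / (b - a)\<^sup>2)"
    by (rule Hoeffding_replicate_pmf[OF assms(6) \<open>a < b\<close> Z_bounds assms(7)])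
  finally show ?thesis unfolding width .
qed

lemma powr_log_eq_inverse_power:
  assumes "0 < n" "0 < z" "real k = c * log 2 n"
  shows "n powr (- c * log 2 z) = 1 / z ^ k"
proof -
  have "n powr (- c * log 2 z) = exp (- ((c * log 2 n) * ln z))"
    using assms by (simp add: powr_def log_def field_simps)
  also have "\<dots> = inverse (exp (ln z) ^ k)"
    by (simp add: assms(3)[symmetric] exp_minus exp_of_nat_mult)
  also have "\<dots> = 1 / z ^ k"
    using assms by (simp add: divide_inverse)
  finally show ?thesis .
qed

lemma alpha_c_eq:
  assumes "0 < p" "p < 1/2"
  shows "alpha_c c p = 1 - c * log 2 (1 - p / (1 - p))"
proof -
  define r where "r = p / (1 - p)"
  have r: "0 < r" "r < 1" using assms by (auto simp: r_def field_simps)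
  have "log 2 ((1 - p) / p) = - log 2 r" using assms by (simp add: r_def log_divide)
  then have "alpha_c c p = 1 - c * log 2 r + (c * (- (1 - r) * log 2 (1 - r) - r * log 2 r) + c * log 2 r) / (1 - r)"
    unfolding alpha_c_def H2_def r_def[symmetric] by simp
  also have "\<dots> = 1 - c * log 2 (1 - r)" using r by (simp add: field_simps)
  finally show ?thesis by (simp add: r_def)
qed

lemma exp_neg_divide_le_exp_neg_divide_mult:
  fixes A B N :: real
  assumes "0 \<le> A" "0 < B" "1 \<le> N"
  shows "exp (- A / B) \<le> exp (- A / (N * B))"
proof -
  have "B \<le> N * B" using mult_right_mono[of 1 N B] assms by simp
  then have "A / (N * B) \<le> A / B" using assms by (intro divide_left_mono) auto
  then show ?thesis by simp
qed

theorem lemma3: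
  fixes p c \<epsilon> :: real and s x :: "bool list" and i T :: nat
  assumes "0 < p" "p < 1/2" "0 < c"
    and "real (length x) = c * log 2 (real (length s))" "length x \<ge> 2"
    and "1 \<le> i" "i \<le> length s - length x + 1" "length x \<le> length s"
    and "T \<ge> 1" and "\<epsilon> > 0"
  shows "measure_pmf.prob (traces_pmf p s T)
           {ts. \<bar>K_hat p (length s) ts x i - K_true p s x i\<bar> \<ge> \<epsilon>}
         \<le> 2 * exp (- (2 * real T * \<epsilon>^2) /
              (real (length s) *
               ((real (length s)) powr (- c * log 2 (1 - p))
                * (1 + 2 * (real (length s)) powr (alpha_c c p)))^2))"
proof -
  define n W where "n = real (length s)" and "W = 1 / (1 - p / (1 - p)) ^ length x"
  define B where "B = (1 + 2 * (n * W)) / (1 - p) ^ length x"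
  have n: "1 \<le> n" using assms(5,8) by (simp add: n_def)
  have k: "real (length x) = c * log 2 n" using assms(4) by (simp add: n_def)
  have r: "0 < 1 - p / (1 - p)" using assms(1,2) by (simp add: field_simps)
  have "n powr alpha_c c p = n powr 1 * n powr (- c * log 2 (1 - p / (1 - p)))"
    unfolding alpha_c_eq[OF assms(1,2)] powr_add[symmetric] by simp
  also have "\<dots> = n * W"
    using powr_log_eq_inverse_power[OF _ r k] n by (simp add: W_def)
  finally have B_eq: "n powr (- c * log 2 (1 - p)) * (1 + 2 * n powr alpha_c c p) = B"
    using powr_log_eq_inverse_power[of n "1 - p", OF _ _ k] n assms(1,2)
    by (simp add: B_def)
  have "0 < B" unfolding B_def W_def using n r assms(1,2) by (intro divide_pos_pos add_pos_nonneg) auto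
  have "measure_pmf.prob (traces_pmf p s T) {ts. \<bar>K_hat p (length s) ts x i - K_true p s x i\<bar> \<ge> \<epsilon>}
      \<le> 2 * exp (- 2 * real T * \<epsilon>\<^sup>2 / B\<^sup>2)"
    unfolding B_def n_def W_def using assms by (intro K_hat_concentration) auto
  also have "\<dots> \<le> 2 * exp (- (2 * real T * \<epsilon>\<^sup>2) / (n * B\<^sup>2))"
    using exp_neg_divide_le_exp_neg_divide_mult[of "2 * real T * \<epsilon>\<^sup>2" "B\<^sup>2" n] n \<open>0 < B\<close> by simp
  finally show ?thesis unfolding B_eq[symmetric] n_def .
qed

end
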